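(* Let $\gamma>0$ and suppose $V^{k-1}$ and $V^k$ are finite dimensional. Consider the eigenproblem: find $(\sigma,u,p)\in V^{k-1}\times V^k\times\mathfrak H^k$ and $\lambda\in\mathbb R$ with $$A(\sigma,u,p;\tau,v,q)=\lambda B_\gamma(\sigma,u,p;\tau,v,q)\quad\forall(\tau,v,q)\in V^{k-1}\times V^k\times\mathfrak H^k,$$ where $A(\sigma,u,p;\tau,v,q)=\langle\mathrm d^ku,\mathrm d^kv\rangle+\langle\mathrm d^{k-1}\sigma,v\rangle+\langle u,\mathrm d^{k-1}\tau\rangle-\langle\sigma,\tau\rangle+\langle p,v\rangle+\langle u,q\rangle$ and $B_\gamma(\sigma,u,p;\tau,v,q)=\gamma^{-1}\langle u-u_{\mathfrak H},v-v_{\mathfrak H}\rangle+\langle u_{\mathfrak H},v_{\mathfrak H}\rangle+\langle\mathrm d^ku,\mathrm d^kv\rangle+\langle\sigma,\tau\rangle+\gamma\langle\mathrm d^{k-1}\sigma,\mathrm d^{k-1}\tau\rangle+\langle p,q\rangle$. Then: (i) for every $\sigma\in V^{k-1}$, $(\sigma,-\gamma\mathrm d^{k-1}\sigma,0)$ is an eigenvector with $\lambda=-1$; (ii) for every $p\in\mathfrak H^k$ and $\lambda\in\{1,-1\}$, $(0,\lambda p,p)$ is an eigenvector with eigenvalue $\lambda$; (iii) if $u_\perp\in\mathfrak Z^{k,\perp}$ and $\mu>0$ satisfy $\langle\mathrm d^ku_\perp,\mathrm d^kv_\perp\rangle=\mu\langle u_\perp,v_\perp\rangle$ for all $v_\perp\in\mathfrak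 Z^{k,\perp}$, then $(0,u_\perp,0)$ is an eigenvector with $\lambda=\frac{\mu\gamma}{\mu\gamma+1}$; (iv) if $\sigma_\perp\in\mathfrak Z^{k-1,\perp}$ and $\nu>0$ satisfy $\langle\mathrm d^{k-1}\sigma_\perp,\mathrm d^{k-1}\tau_\perp\rangle=\nu\langle\sigma_\perp,\tau_\perp\rangle$ for all $\tau_\perp\in\mathfrak Z^{k-1,\perp}$, then with $\lambda=\frac{\nu\gamma}{\nu\gamma+1}$, $(\sigma_\perp,\gamma\lambda^{-1}\mathrm d^{k-1}\sigma_\perp,0)$ is an eigenvector with eigenvalue $\lambda$. Moreover, the eigenvectors in (i)–(iv) contain a basis of $V^{k-1}\times V^k\times\mathfrak H^k$, so these are all the eigenpairs.
   Context: $(\{W^j\},\{\mathrm d^j\})$ is a closed Hilbert complex with inner product $\langle\cdot,\cdot\rangle$ and norm $\|\cdot\|$, and $(\{V^j\},\{\mathrm d^j\})$ its domain complex $\cdots\to V^{k-1}\xrightarrow{\mathrm d^{k-1}}V^k\xrightarrow{\mathrm d^k}V^{k+1}\to\cdots$ ($V^j\subseteq W^j$ the domain of $\mathrm d^j$, $\mathrm d^j\mathrm d^{j-1}=0$, ranges closed). Harmonic forms: $\mathfrak H^k=\{\mathfrak h\in V^k:\mathrm d^k\mathfrak h=0,\ \langle\mathfrak h,\mathrm d^{k-1}\sigma\rangle=0\ \forall\sigma\in V^{k-1}\}$. $\mathfrak Z^{j,\perp}=\{v\in V^j:\langle v,z\rangle=0\ \forall z\in V^j\text{ with }\mathrm d^jz=0\}$.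 For $v\in V^k$, $v_{\mathfrak H}$ denotes the $\langle\cdot,\cdot\rangle$-orthogonal projection of $v$ onto $\mathfrak H^k$ and $v_\perp$ the orthogonal projection onto $\mathfrak Z^{k,\perp}$ (similarly $\tau_\perp$ for $\tau\in V^{k-1}$ onto $\mathfrak Z^{k-1,\perp}$). *)

theory Defs
  imports "HOL-Analysis.Analysis"
begin

definition fin_dim_subspace :: "'a::real_vector set \<Rightarrow> bool" where
  "fin_dim_subspace V \<longleftrightarrow> subspace V \<and> (\<exists>S. finite S \<and> span S = V)"

text \<open>A map that is linear on its domain V (the domain of an unbounded operator).\<close>
definition linear_on_dom :: "'a::real_vector set \<Rightarrow> ('a \<Rightarrow> 'b::real_vector) \<Rightarrow> bool" where
  "linear_on_dom V f \<longleftrightarrow> (\<forall>x\<in>V. \<forall>y\<in>V. f (x + y) = f x + f y) \<and> (\<forall>c. \<forall>x\<in>V. f (c *\<^sub>R x) = c *\<^sub>R f x)"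

definition orth_proj :: "'a::real_inner set \<Rightarrow> 'a \<Rightarrow> 'a" where
  "orth_proj S v = (THE p. p \<in> S \<and> (\<forall>s\<in>S. inner (v - p) s = 0))"

text \<open>Harmonic forms at level k: V1 = V^k, V0 = V^(k-1), d0 = d^(k-1), d1 = d^k.\<close>
definition harmonic :: "'a::real_inner set \<Rightarrow> 'b::real_inner set \<Rightarrow> ('a \<Rightarrow> 'b) \<Rightarrow> ('b \<Rightarrow> 'c::real_inner) \<Rightarrow> 'b set" where
  "harmonic V0 V1 d0 d1 = {h \<in> V1. d1 h = 0 \<and> (\<forall>\<sigma>\<in>V0. inner h (d0 \<sigma>) = 0)}"

definition Zperp :: "'a::real_inner set \<Rightarrow> ('a \<Rightarrow> 'b::real_vector) \<Rightarrow> 'a set" where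
  "Zperp V d = {v \<in> V. \<forall>z\<in>V. d z = 0 \<longrightarrow> inner v z = 0}"

definition formA :: "('a::real_inner \<Rightarrow> 'b::real_inner) \<Rightarrow> ('b \<Rightarrow> 'c::real_inner)
    \<Rightarrow> 'a \<times> 'b \<times> 'b \<Rightarrow> 'a \<times> 'b \<times> 'b \<Rightarrow> real" where
  "formA d0 d1 x y = (case x of (\<sigma>, u, p) \<Rightarrow> case y of (\<tau>, v, q) \<Rightarrow>
      inner (d1 u) (d1 v) + inner (d0 \<sigma>) v + inner u (d0 \<tau>) - inner \<sigma> \<tau> + inner p v + inner u q)"

definition formB :: "'a::real_inner set \<Rightarrow> 'b::real_inner set \<Rightarrow> ('a \<Rightarrow> 'b) \<Rightarrow> ('b \<Rightarrow> 'c::real_inner)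
    \<Rightarrow> real \<Rightarrow> 'a \<times> 'b \<times> 'b \<Rightarrow> 'a \<times> 'b \<times> 'b \<Rightarrow> real" where
  "formB V0 V1 d0 d1 \<gamma> x y = (case x of (\<sigma>, u, p) \<Rightarrow> case y of (\<tau>, v, q) \<Rightarrow>
      (let H = harmonic V0 V1 d0 d1; uH = orth_proj H u; vH = orth_proj H v in
        inverse \<gamma> * inner (u - uH) (v - vH) + inner uH vH + inner (d1 u) (d1 v)
        + inner \<sigma> \<tau> + \<gamma> * inner (d0 \<sigma>) (d0 \<tau>) + inner p q))"

definition mixed_space :: "'a::real_inner set \<Rightarrow> 'b::real_inner set \<Rightarrow> ('a \<Rightarrow> 'b) \<Rightarrow> ('b \<Rightarrow> 'c::real_inner)
    \<Rightarrow> ('a \<times> 'b \<times> 'b) set" where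
  "mixed_space V0 V1 d0 d1 = V0 \<times> V1 \<times> harmonic V0 V1 d0 d1"

definition is_eigenpair :: "'a::real_inner set \<Rightarrow> 'b::real_inner set \<Rightarrow> ('a \<Rightarrow> 'b) \<Rightarrow> ('b \<Rightarrow> 'c::real_inner)
    \<Rightarrow> real \<Rightarrow> real \<Rightarrow> 'a \<times> 'b \<times> 'b \<Rightarrow> bool" where
  "is_eigenpair V0 V1 d0 d1 \<gamma> lam x \<longleftrightarrow>
     x \<in> mixed_space V0 V1 d0 d1 \<and> x \<noteq> 0 \<and>
     (\<forall>y\<in>mixed_space V0 V1 d0 d1. formA d0 d1 x y = lam * formB V0 V1 d0 d1 \<gamma> x y)"

definition listed_eigenpairs :: "'a::real_inner set \<Rightarrow> 'b::real_inner set \<Rightarrow> ('a \<Rightarrow> 'b) \<Rightarrow> ('b \<Rightarrow> 'c::real_inner)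
    \<Rightarrow> real \<Rightarrow> (('a \<times> 'b \<times> 'b) \<times> real) set" where
  "listed_eigenpairs V0 V1 d0 d1 \<gamma> =
     {((\<sigma>, - \<gamma> *\<^sub>R d0 \<sigma>, 0), -1) | \<sigma>. \<sigma> \<in> V0 \<and> \<sigma> \<noteq> 0}
   \<union> {((0, l *\<^sub>R p, p), l) | p l. p \<in> harmonic V0 V1 d0 d1 \<and> p \<noteq> 0 \<and> l \<in> {1, -1}}
   \<union> {((0, u, 0), \<mu> * \<gamma> / (\<mu> * \<gamma> + 1)) | u \<mu>. u \<in> Zperp V1 d1 \<and> u \<noteq> 0 \<and> \<mu> > 0 \<and>
        (\<forall>v\<in>Zperp V1 d1. inner (d1 u) (d1 v) = \<mu> * inner u v)}
   \<union> {((\<sigma>, (\<gamma> / (\<nu> * \<gamma> / (\<nu> * \<gamma> + 1))) *\<^sub>R d0 \<sigma>, 0), \<nu> * \<gamma> / (\<nu> * \<gamma> + 1)) | \<sigma> \<nu>.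
        \<sigma> \<in> Zperp V0 d0 \<and> \<sigma> \<noteq> 0 \<and> \<nu> > 0 \<and>
        (\<forall>\<tau>\<in>Zperp V0 d0. inner (d0 \<sigma>) (d0 \<tau>) = \<nu> * inner \<sigma> \<tau>)}"

end

theory Submission
  imports Defs
begin

text \<open>The orthogonal Hodge decompositions \<open>V\<^sup>k = d V\<^bsup>k-1\<^esup> \<oplus> H\<^sup>k \<oplus> Z\<^bsup>k,\<bottom>\<^esup>\<close> and
  \<open>V\<^bsup>k-1\<^esup> = ker d \<oplus> Z\<^bsup>k-1,\<bottom>\<^esup>\<close> decouple the pencil \<open>(A, B\<^sub>\<gamma>)\<close>. Testing an eigenvector
  \<open>(\<sigma>, d\<rho> + h + w, p)\<close> against each summand gives \<open>h = \<lambda> p\<close>, \<open>p = \<lambda> h\<close> and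
  \<open>\<lambda> d\<rho> = \<gamma> d\<sigma>\<close>; for \<open>\<lambda> \<noteq> \<plusminus>1\<close> it forces \<open>p = 0\<close>, \<open>\<sigma> \<in> Z\<^bsup>k-1,\<bottom>\<^esup>\<close> and the two
  generalised eigenproblems \<open>\<langle>d w, d v\<rangle> = m \<langle>w, v\<rangle>\<close> on \<open>Z\<^bsup>k,\<bottom>\<^esup>\<close> and
  \<open>\<langle>d \<sigma>, d \<tau>\<rangle> = m \<langle>\<sigma>, \<tau>\<rangle>\<close> on \<open>Z\<^bsup>k-1,\<bottom>\<^esup>\<close> with \<open>\<lambda> = m\<gamma>/(m\<gamma> + 1)\<close>. This sorts every
  eigenvector into the families (i)--(iv). They span because in finite dimension each
  \<open>Z\<^sup>\<bottom>\<close> is spanned by such generalised eigenvectors, which are found by maximising the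
  Rayleigh quotient \<open>\<parallel>d x\<parallel>/\<parallel>x\<parallel>\<close>.\<close>

section \<open>Linear maps on finite-dimensional subspaces\<close>

lemma linear_on_domD:
  assumes "linear_on_dom V f"
  shows linear_on_dom_add: "x \<in> V \<Longrightarrow> y \<in> V \<Longrightarrow> f (x + y) = f x + f y"
    and linear_on_dom_scale: "x \<in> V \<Longrightarrow> f (c *\<^sub>R x) = c *\<^sub>R f x"
  using assms by (simp_all add: linear_on_dom_def)

lemma linear_on_dom_subset: "linear_on_dom V f \<Longrightarrow> W \<subseteq> V \<Longrightarrow> linear_on_dom W f"
  unfolding linear_on_dom_def by blast

lemma linear_on_dom_zero: "linear_on_dom V f \<Longrightarrow> subspace V \<Longrightarrow> f 0 = 0"
  using linear_on_dom_scale[of V f 0 0] by (simp add: subspace_0)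

lemma linear_on_dom_diff:
  "linear_on_dom V f \<Longrightarrow> subspace V \<Longrightarrow> x \<in> V \<Longrightarrow> y \<in> V \<Longrightarrow> f (x - y) = f x - f y"
  using linear_on_dom_add[of V f x "-y"] linear_on_dom_scale[of V f y "-1"]
  by (simp add: subspace_neg)

lemma linear_on_dom_sum:
  assumes "linear_on_dom V f" "subspace V" "finite I" "\<And>i. i \<in> I \<Longrightarrow> g i \<in> V"
  shows "f (\<Sum>i\<in>I. g i) = (\<Sum>i\<in>I. f (g i))"
  using assms(3,4)
proof (induction I rule: finite_induct)
  case empty
  then show ?case using linear_on_dom_zero[OF assms(1,2)] by simp
next
  case (insert a I)
  have "(\<Sum>i\<in>I. g i) \<in> V" using insert by (intro subspace_sum[OF assms(2)]) auto
  then show ?case using insert linear_on_dom_add[OF assms(1), of "g a"] by simp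
qed

lemma subspace_linear_on_dom_vimage:
  assumes "subspace V" "linear_on_dom V f" "subspace S"
  shows "subspace {x \<in> V. f x \<in> S}"
  using assms linear_on_dom_zero[OF assms(2,1)] unfolding subspace_def
  by (auto simp: linear_on_dom_def)

lemma fin_dim_subspace_subset:
  assumes "fin_dim_subspace V" "subspace W" "W \<subseteq> V"
  shows "fin_dim_subspace W"
proof -
  obtain T where T: "finite T" "span T = V" using assms(1) by (auto simp: fin_dim_subspace_def)
  obtain B where B: "B \<subseteq> W" "independent B" "W \<subseteq> span B"
    using maximal_independent_subset[of W] by blast
  have "finite B" using independent_span_bound[OF T(1) B(2)] B(1) assms(3) T(2) by blast
  moreover have "span B = W" using B assms(2) by (simp add: span_subspace)
  ultimately show ?thesis using assms(2) by (auto simp: fin_dim_subspace_def)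
qed

lemma fin_dim_subspace_orthonormal_basis:
  assumes "fin_dim_subspace W"
  obtains C where "finite C" "span C = W" "pairwise orthogonal C" "\<And>b. b \<in> C \<Longrightarrow> norm b = 1"
proof -
  obtain T where "finite T" "span T = W" using assms by (auto simp: fin_dim_subspace_def)
  then obtain C0 where C0: "finite C0" "span C0 = W" "pairwise orthogonal C0"
    using basis_orthogonal by metis
  define C where "C = (\<lambda>b. inverse (norm b) *\<^sub>R b) ` (C0 - {0})"
  show ?thesis
  proof
    show "finite C" using C0(1) by (simp add: C_def)
    have "span C = span (C0 - {0})"
      unfolding C_def using C0(1) by (intro span_image_scale) auto
    then show "span C = W" using C0(2) by simp
    show "pairwise orthogonal C"
      using C0(3) by (auto simp: C_def pairwise_def orthogonal_def)
    fix b assume "b \<in> C"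
    then obtain c where "c \<noteq> 0" "b = inverse (norm c) *\<^sub>R c" unfolding C_def by blast
    then show "norm b = 1" by simp
  qed
qed

lemma orthonormal_expansion:
  fixes C :: "'a::real_inner set"
  assumes "finite C" "pairwise orthogonal C" "\<And>b. b \<in> C \<Longrightarrow> norm b = 1"
  shows orthonormal_expansion_orthogonal: "c \<in> C \<Longrightarrow> inner (x - (\<Sum>b\<in>C. inner b x *\<^sub>R b)) c = 0"
    and orthonormal_expansion_eq: "x \<in> span C \<Longrightarrow> x = (\<Sum>b\<in>C. inner b x *\<^sub>R b)"
proof -
  have orth: "inner (x - (\<Sum>b\<in>C. inner b x *\<^sub>R b)) c = 0" if "c \<in> C" for x c
  proof -
    have "inner (\<Sum>b\<in>C. inner b x *\<^sub>R b) c = (\<Sum>b\<in>C. if b = c then inner b x else 0)"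
      unfolding inner_sum_left
      using assms(2,3) that
      by (intro sum.cong) (auto simp: pairwise_def orthogonal_def dot_square_norm)
    then show ?thesis
      using assms(1) that by (simp add: inner_diff_left inner_diff_right inner_commute)
  qed
  then show "c \<in> C \<Longrightarrow> inner (x - (\<Sum>b\<in>C. inner b x *\<^sub>R b)) c = 0" .
  assume "x \<in> span C"
  define r where "r = x - (\<Sum>b\<in>C. inner b x *\<^sub>R b)"
  have "(\<Sum>b\<in>C. inner b x *\<^sub>R b) \<in> span C"
    by (intro span_sum span_scale span_base)
  with \<open>x \<in> span C\<close> have "r \<in> span C"
    unfolding r_def by (rule span_diff)
  then have "orthogonal r r"
    by (rule orthogonal_to_span) (use orth in \<open>simp add: r_def orthogonal_def\<close>)
  then show "x = (\<Sum>b\<in>C. inner b x *\<^sub>R b)" by (simp add: r_def orthogonal_self)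
qed

lemma orthogonal_projection_exists:
  assumes "fin_dim_subspace W"
  obtains p where "p \<in> W" "\<And>s. s \<in> W \<Longrightarrow> inner (x - p) s = 0"
proof -
  obtain C where C: "finite C" "span C = W" "pairwise orthogonal C" "\<And>b. b \<in> C \<Longrightarrow> norm b = 1"
    using fin_dim_subspace_orthonormal_basis[OF assms] by blast
  define p where "p = (\<Sum>b\<in>C. inner b x *\<^sub>R b)"
  have "p \<in> W" unfolding p_def C(2)[symmetric] by (intro span_sum span_scale span_base)
  moreover have "orthogonal (x - p) s" if "s \<in> W" for s
    using that unfolding C(2)[symmetric]
    by (rule orthogonal_to_span) (use orthonormal_expansion_orthogonal[OF C(1,3,4)] in
        \<open>simp add: p_def orthogonal_def\<close>)
  ultimately show ?thesis using that by (simp add: orthogonal_def)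
qed

lemma orth_proj_eqI:
  assumes "subspace S" "p \<in> S" "\<And>s. s \<in> S \<Longrightarrow> inner (v - p) s = 0"
  shows "orth_proj S v = p"
  unfolding orth_proj_def
proof (rule the_equality)
  show "p \<in> S \<and> (\<forall>s\<in>S. inner (v - p) s = 0)" using assms by blast
next
  fix p' assume p': "p' \<in> S \<and> (\<forall>s\<in>S. inner (v - p') s = 0)"
  then have "p' - p \<in> S" using assms by (simp add: subspace_diff)
  then have "inner (p' - p) (p' - p) = inner (v - p) (p' - p) - inner (v - p') (p' - p)"
    by (simp add: inner_diff_left)
  also have "\<dots> = 0" using \<open>p' - p \<in> S\<close> p' assms(3) by simp
  finally show "p' = p" by simp
qed

lemma orth_proj_fin_dim:
  assumes "fin_dim_subspace S"
  shows orth_proj_in: "orth_proj S v \<in> S"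
    and orth_proj_orthogonal: "s \<in> S \<Longrightarrow> inner (v - orth_proj S v) s = 0"
proof -
  have S: "subspace S" using assms by (simp add: fin_dim_subspace_def)
  obtain p where p: "p \<in> S" "\<And>s. s \<in> S \<Longrightarrow> inner (v - p) s = 0"
    using orthogonal_projection_exists[OF assms] by blast
  from S p have "orth_proj S v = p" by (rule orth_proj_eqI)
  with p show "orth_proj S v \<in> S" "s \<in> S \<Longrightarrow> inner (v - orth_proj S v) s = 0" by auto
qed

lemma eq_if_inner_eq_on_subspace:
  assumes "subspace S" "a \<in> S" "b \<in> S" "\<And>s. s \<in> S \<Longrightarrow> inner a s = inner b s"
  shows "a = b"
proof -
  have "inner (a - b) (a - b) = 0"
    using assms(4)[of "a - b"] assms(1-3) by (simp add: subspace_diff inner_diff_left)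
  then show ?thesis by simp
qed

lemma subspace_Zperp: "subspace V \<Longrightarrow> subspace (Zperp V d)"
  unfolding subspace_def Zperp_def by (auto simp: inner_add_left)

lemma Zperp_subset: "Zperp V d \<subseteq> V"
  by (auto simp: Zperp_def)

lemma Zperp_kernel_orthogonal: "w \<in> Zperp V d \<Longrightarrow> z \<in> V \<Longrightarrow> d z = 0 \<Longrightarrow> inner w z = 0"
  by (simp add: Zperp_def)

lemma Zperp_kernel_eq_0: "w \<in> Zperp V d \<Longrightarrow> d w = 0 \<Longrightarrow> w = 0"
  using Zperp_kernel_orthogonal[of w V d w] Zperp_subset by fastforce

lemma Zperp_rayleigh_pos:
  assumes "w \<in> Zperp V d" "w \<noteq> 0" "inner (d w) (d w) = m * inner w w"
  shows "m > 0"
proof -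
  have "d w \<noteq> 0" using Zperp_kernel_eq_0 assms(1,2) by blast
  then have "0 < inner (d w) (d w)" by simp
  then have "0 < m * inner w w" using assms(3) by simp
  then show ?thesis using inner_ge_zero[of w] by (auto simp: zero_less_mult_iff)
qed

lemma Zperp_decomposition:
  assumes "fin_dim_subspace V" "linear_on_dom V d" "v \<in> V"
  obtains z where "z \<in> V" "d z = 0" "v - z \<in> Zperp V d"
proof -
  have V: "subspace V" using assms(1) by (simp add: fin_dim_subspace_def)
  let ?K = "{x \<in> V. d x \<in> {0}}"
  have "fin_dim_subspace ?K"
    using subspace_linear_on_dom_vimage[OF V assms(2) subspace_single_0]
    by (intro fin_dim_subspace_subset[OF assms(1)]) auto
  then obtain z where z: "z \<in> ?K" "\<And>s. s \<in> ?K \<Longrightarrow> inner (v - z) s = 0"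
    by (rule orthogonal_projection_exists[where x = v]) blast
  then have "v - z \<in> Zperp V d" using assms(3) V by (auto simp: Zperp_def subspace_diff)
  then show ?thesis using that z(1) by blast
qed

lemma Zperp_eigen_equation_extends:
  assumes "fin_dim_subspace V" "linear_on_dom V d" "u \<in> Zperp V d" "v \<in> V"
    and eq: "\<And>v. v \<in> Zperp V d \<Longrightarrow> inner (d u) (d v) = \<mu> * inner u v"
  shows "inner (d u) (d v) = \<mu> * inner u v"
proof -
  obtain z where z: "z \<in> V" "d z = 0" "v - z \<in> Zperp V d"
    using Zperp_decomposition[OF assms(1,2,4)] by blast
  have "d (v - z) = d v"
    using linear_on_dom_diff[OF assms(2) _ assms(4) z(1)] assms(1) z(2)
    by (simp add: fin_dim_subspace_def)
  then have "inner (d u) (d v) = \<mu> * inner u (v - z)" using eq[OF z(3)] by simp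
  also have "\<dots> = \<mu> * inner u v"
    using Zperp_kernel_orthogonal[OF assms(3) z(1,2)] by (simp add: inner_diff_right)
  finally show ?thesis .
qed

section \<open>Rayleigh quotients\<close>

lemma compact_bounded_combinations:
  fixes C :: "'a::real_normed_vector set"
  assumes "finite C"
  shows "compact {(\<Sum>b\<in>C. f b *\<^sub>R b) | f. \<forall>b\<in>C. \<bar>f b\<bar> \<le> 1}"
  using assms
proof (induction C rule: finite_induct)
  case empty
  then show ?case by simp
next
  case (insert a C)
  let ?K = "\<lambda>C. {(\<Sum>b\<in>C. f b *\<^sub>R b) | f. \<forall>b\<in>C. \<bar>f b\<bar> \<le> 1}"
  let ?S = "(\<lambda>t. t *\<^sub>R a) ` {-1..1}"
  have "compact ?S" by (intro compact_continuous_image continuous_intros compact_Icc)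
  moreover have "?K (insert a C) = {x + y | x y. x \<in> ?S \<and> y \<in> ?K C}"
  proof (intro set_eqI iffI)
    fix z assume "z \<in> ?K (insert a C)"
    then obtain f where "z = f a *\<^sub>R a + (\<Sum>b\<in>C. f b *\<^sub>R b)" "\<forall>b\<in>insert a C. \<bar>f b\<bar> \<le> 1"
      using insert(1,2) by auto
    then show "z \<in> {x + y | x y. x \<in> ?S \<and> y \<in> ?K C}" by (fastforce simp: abs_le_iff)
  next
    fix z assume "z \<in> {x + y | x y. x \<in> ?S \<and> y \<in> ?K C}"
    then obtain t f where tf: "z = t *\<^sub>R a + (\<Sum>b\<in>C. f b *\<^sub>R b)" "\<bar>t\<bar> \<le> 1" "\<forall>b\<in>C. \<bar>f b\<bar> \<le> 1"
      by (auto simp: abs_le_iff)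
    have "(\<Sum>b\<in>C. (f(a := t)) b *\<^sub>R b) = (\<Sum>b\<in>C. f b *\<^sub>R b)"
      using insert(2) by (intro sum.cong) auto
    then have "z = (\<Sum>b\<in>insert a C. (f(a := t)) b *\<^sub>R b)" using tf(1) insert(1,2) by simp
    moreover have "\<forall>b\<in>insert a C. \<bar>(f(a := t)) b\<bar> \<le> 1" using tf(2,3) by auto
    ultimately show "z \<in> ?K (insert a C)" by blast
  qed
  ultimately show ?case using compact_sums[OF _ insert(3)] by simp
qed

lemma compact_unit_sphere_fin_dim:
  fixes W :: "'a::real_inner set"
  assumes "fin_dim_subspace W"
  shows "compact (W \<inter> sphere 0 1)"
proof -
  obtain C where C: "finite C" "span C = W" "pairwise orthogonal C" "\<And>b. b \<in> C \<Longrightarrow> norm b = 1"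
    using fin_dim_subspace_orthonormal_basis[OF assms] by blast
  define K where "K = {(\<Sum>b\<in>C. f b *\<^sub>R b) | f. \<forall>b\<in>C. \<bar>f b\<bar> \<le> 1}"
  have "K \<subseteq> W" unfolding K_def C(2)[symmetric] by clarify (intro span_sum span_scale span_base)
  moreover have "W \<inter> sphere 0 1 \<subseteq> K"
  proof
    fix x assume x: "x \<in> W \<inter> sphere 0 1"
    have "\<bar>inner b x\<bar> \<le> 1" if "b \<in> C" for b
      using Cauchy_Schwarz_ineq2[of b x] x C(4)[OF that] by simp
    moreover have "x = (\<Sum>b\<in>C. inner b x *\<^sub>R b)"
      using orthonormal_expansion_eq[OF C(1,3,4)] x C(2) by blast
    ultimately show "x \<in> K"
      unfolding K_def by (intro CollectI exI[where x = "\<lambda>b. inner b x"]) auto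
  qed
  ultimately have "W \<inter> sphere 0 1 = K \<inter> sphere 0 1" by blast
  moreover have "compact K" unfolding K_def by (rule compact_bounded_combinations[OF C(1)])
  moreover have "closed (sphere (0::'a) 1)"
    unfolding sphere_def by (intro closed_Collect_eq continuous_intros)
  ultimately show ?thesis by (metis compact_Int_closed)
qed

lemma continuous_on_linear_on_dom_fin_dim:
  fixes D :: "'a::real_inner \<Rightarrow> 'b::real_normed_vector"
  assumes "fin_dim_subspace W" "linear_on_dom W D"
  shows "continuous_on W D"
proof -
  obtain C where C: "finite C" "span C = W" "pairwise orthogonal C" "\<And>b. b \<in> C \<Longrightarrow> norm b = 1"
    using fin_dim_subspace_orthonormal_basis[OF assms(1)] by blast
  have W: "subspace W" using assms(1) by (simp add: fin_dim_subspace_def)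
  have CW: "b \<in> C \<Longrightarrow> b \<in> W" for b using C(2) span_base by blast
  have "D x = (\<Sum>b\<in>C. inner b x *\<^sub>R D b)" if "x \<in> W" for x
  proof -
    have "D x = D (\<Sum>b\<in>C. inner b x *\<^sub>R b)"
      using orthonormal_expansion_eq[OF C(1,3,4)] that C(2) by metis
    also have "\<dots> = (\<Sum>b\<in>C. inner b x *\<^sub>R D b)"
      using linear_on_dom_sum[OF assms(2) W C(1)] linear_on_dom_scale[OF assms(2)] CW W
      by (simp add: subspace_scale)
    finally show ?thesis .
  qed
  moreover have "continuous_on W (\<lambda>x. \<Sum>b\<in>C. inner b x *\<^sub>R D b)"
    by (intro continuous_intros)
  ultimately show ?thesis using continuous_on_cong by fastforce
qed

lemma rayleigh_maximizer_exists:
  fixes D :: "'a::real_inner \<Rightarrow> 'b::real_normed_vector"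
  assumes "fin_dim_subspace W" "linear_on_dom W D" "W \<noteq> {0}"
  obtains w where "w \<in> W" "norm w = 1" "\<And>x. x \<in> W \<Longrightarrow> norm x = 1 \<Longrightarrow> norm (D x) \<le> norm (D w)"
proof -
  have W: "subspace W" using assms(1) by (simp add: fin_dim_subspace_def)
  obtain x where x: "x \<in> W" "x \<noteq> 0" using assms(3) W subspace_0 by blast
  then have "x /\<^sub>R norm x \<in> W \<inter> sphere 0 1" using W by (simp add: subspace_scale)
  moreover have "continuous_on (W \<inter> sphere 0 1) (\<lambda>x. norm (D x))"
    using continuous_on_linear_on_dom_fin_dim[OF assms(1,2)]
    by (intro continuous_on_norm) (rule continuous_on_subset, auto)
  ultimately obtain w where "w \<in> W \<inter> sphere 0 1" "\<forall>y\<in>W \<inter> sphere 0 1. norm (D y) \<le> norm (D w)"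
    using continuous_attains_sup[OF compact_unit_sphere_fin_dim[OF assms(1)]] by blast
  then show ?thesis using that by auto
qed

lemma linear_quadratic_nonpos_imp_zero:
  fixes c e :: real
  assumes "\<And>t. 2 * t * c + t\<^sup>2 * e \<le> 0"
  shows "c = 0"
proof (rule ccontr)
  assume "c \<noteq> 0"
  define s where "s = \<bar>e\<bar> + 1"
  have "s > 0" "2 * s + e > 0" by (auto simp: s_def)
  then have "0 < c\<^sup>2 * (2 * s + e) / s\<^sup>2" using \<open>c \<noteq> 0\<close> by simp
  also have "\<dots> = 2 * (c / s) * c + (c / s)\<^sup>2 * e"
    using \<open>s > 0\<close> by (simp add: field_simps power2_eq_square)
  finally show False using assms[of "c / s"] by simp
qed

text \<open>The quadratic form \<open>\<parallel>D w\<parallel>\<^sup>2 \<parallel>x\<parallel>\<^sup>2 - \<parallel>D x\<parallel>\<^sup>2\<close> is nonnegative on \<open>W\<close> and vanishes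
  at \<open>w\<close>, so its polar form vanishes at \<open>w\<close>.\<close>
lemma rayleigh_maximizer_eigen:
  fixes D :: "'a::real_inner \<Rightarrow> 'b::real_inner"
  assumes W: "subspace W" and D: "linear_on_dom W D" and w: "w \<in> W" "norm w = 1"
    and max: "\<And>x. x \<in> W \<Longrightarrow> norm x = 1 \<Longrightarrow> norm (D x) \<le> norm (D w)"
    and v: "v \<in> W"
  shows "inner (D w) (D v) = (norm (D w))\<^sup>2 * inner w v"
proof -
  define M where "M = (norm (D w))\<^sup>2"
  have bound: "inner (D x) (D x) \<le> M * inner x x" if x: "x \<in> W" for x
  proof (cases "x = 0")
    case True
    then show ?thesis using linear_on_dom_zero[OF D W] by simp
  next
    case False
    have "norm (D (x /\<^sub>R norm x)) \<le> norm (D w)" using max x W False by (simp add: subspace_scale)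
    then have "norm (D x) / norm x \<le> norm (D w)"
      using linear_on_dom_scale[OF D x] by (simp add: divide_inverse_commute)
    then have "norm (D x) \<le> norm (D w) * norm x" using False by (simp add: divide_le_eq)
    then have "(norm (D x))\<^sup>2 \<le> (norm (D w) * norm x)\<^sup>2" by (intro power_mono) auto
    then show ?thesis by (simp add: M_def power_mult_distrib flip: power2_norm_eq_inner)
  qed
  have "2 * t * (inner (D w) (D v) - M * inner w v)
      + t\<^sup>2 * (inner (D v) (D v) - M * inner v v) \<le> 0" for t
  proof -
    have "w + t *\<^sub>R v \<in> W" using W w v by (simp add: subspace_add subspace_scale)
    moreover have "D (w + t *\<^sub>R v) = D w + t *\<^sub>R D v"
      using linear_on_dom_add[OF D w(1)] linear_on_dom_scale[OF D v] W v
      by (simp add: subspace_scale)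
    moreover have "inner w w = 1" "inner (D w) (D w) = M"
      using w(2) by (simp_all add: M_def power2_norm_eq_inner[symmetric])
    ultimately show ?thesis using bound[of "w + t *\<^sub>R v"]
      by (simp add: inner_add_left inner_add_right inner_commute power2_eq_square algebra_simps)
  qed
  then have "inner (D w) (D v) - M * inner w v = 0" by (rule linear_quadratic_nonpos_imp_zero)
  then show ?thesis by (simp add: M_def)
qed

text \<open>The orthogonal complement in \<open>Z\<close> of the span of all eigenvectors would contain a
  Rayleigh maximiser, and that maximiser is an eigenvector on all of \<open>Z\<close>.\<close>
lemma eigenvectors_span:
  fixes D :: "'a::real_inner \<Rightarrow> 'b::real_inner"
  assumes Z: "fin_dim_subspace Z" and D: "linear_on_dom Z D"
    and inj: "\<And>x. x \<in> Z \<Longrightarrow> D x = 0 \<Longrightarrow> x = 0"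
  shows "Z \<subseteq> span {w \<in> Z. w \<noteq> 0 \<and> (\<exists>\<mu>>0. \<forall>v\<in>Z. inner (D w) (D v) = \<mu> * inner w v)}"
proof
  define E where "E = {w \<in> Z. w \<noteq> 0 \<and> (\<exists>\<mu>>0. \<forall>v\<in>Z. inner (D w) (D v) = \<mu> * inner w v)}"
  define U where "U = span E"
  have Zsub: "subspace Z" using Z by (simp add: fin_dim_subspace_def)
  have UZ: "U \<subseteq> Z" unfolding U_def E_def using Zsub by (intro span_minimal) auto
  then have U: "fin_dim_subspace U" unfolding U_def by (intro fin_dim_subspace_subset[OF Z]) auto
  define W where "W = {x \<in> Z. \<forall>u\<in>U. inner x u = 0}"
  have Wsub: "subspace W" using Zsub by (auto simp: W_def subspace_def inner_add_left)
  then have W: "fin_dim_subspace W" by (rule fin_dim_subspace_subset[OF Z]) (auto simp: W_def)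
  have DW: "linear_on_dom W D" using D by (rule linear_on_dom_subset) (auto simp: W_def)
  have "W = {0}"
  proof (rule ccontr)
    assume "W \<noteq> {0}"
    then obtain w where w: "w \<in> W" "norm w = 1"
      and max: "\<And>x. x \<in> W \<Longrightarrow> norm x = 1 \<Longrightarrow> norm (D x) \<le> norm (D w)"
      by (rule rayleigh_maximizer_exists[OF W DW]) blast
    define M where "M = (norm (D w))\<^sup>2"
    have wZ: "w \<in> Z" and w_orth: "\<And>u. u \<in> U \<Longrightarrow> inner w u = 0"
      using w(1) by (auto simp: W_def)
    have eqW: "inner (D w) (D v) = M * inner w v" if "v \<in> W" for v
      unfolding M_def using Wsub DW w max that by (rule rayleigh_maximizer_eigen)
    have D_orth: "inner (D w) (D u) = 0" if "u \<in> U" for u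
    proof -
      have "E \<subseteq> {u \<in> Z. D u \<in> {y. inner (D w) y = 0}}"
        using wZ w_orth by (force simp: E_def U_def inner_commute intro: span_base)
      then have "U \<subseteq> {u \<in> Z. D u \<in> {y. inner (D w) y = 0}}"
        unfolding U_def
        by (intro span_minimal subspace_linear_on_dom_vimage[OF Zsub D subspace_hyperplane])
      then show ?thesis using that by blast
    qed
    have "inner (D w) (D v) = M * inner w v" if v: "v \<in> Z" for v
    proof -
      define p where "p = orth_proj U v"
      have p: "p \<in> U" "v - p \<in> W"
        using orth_proj_fin_dim[OF U] v UZ
        by (auto simp: p_def W_def intro!: subspace_diff[OF Zsub])
      then have "D v = D (v - p) + D p"
        using linear_on_dom_add[OF D, of "v - p" p] UZ by (auto simp: W_def)
      then show ?thesis
        using eqW[OF p(2)] D_orth[OF p(1)] w_orth[OF p(1)]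
        by (simp add: inner_add_right inner_diff_right)
    qed
    moreover have "M > 0" using inj[OF wZ] w(2) by (auto simp: M_def)
    ultimately have "w \<in> U" using wZ w(2) unfolding U_def E_def by (auto intro!: span_base)
    then show False using w_orth[of w] w(2) by simp
  qed
  fix x assume "x \<in> Z"
  then have "x - orth_proj U x \<in> W"
    using orth_proj_fin_dim[OF U] UZ by (auto simp: W_def intro!: subspace_diff[OF Zsub])
  then have "x = orth_proj U x" using \<open>W = {0}\<close> by simp
  then show "x \<in> span E" using orth_proj_in[OF U] unfolding U_def by metis
qed

lemma Zperp_eigenvectors_span:
  assumes "fin_dim_subspace V" "linear_on_dom V d"
  shows "Zperp V d \<subseteq> span {w \<in> Zperp V d. w \<noteq> 0 \<and>
    (\<exists>\<mu>>0. \<forall>v\<in>Zperp V d. inner (d w) (d v) = \<mu> * inner w v)}"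
proof -
  have "subspace (Zperp V d)" using assms(1) subspace_Zperp by (auto simp: fin_dim_subspace_def)
  then show ?thesis
    using Zperp_subset[of V d] Zperp_kernel_eq_0[of _ V d]
    by (intro eigenvectors_span fin_dim_subspace_subset[OF assms(1)]
        linear_on_dom_subset[OF assms(2)]) auto
qed

section \<open>The Hodge decomposition\<close>

locale fin_dim_complex =
  fixes V0 :: "'a::real_inner set" and V1 :: "'b::real_inner set"
    and d0 :: "'a \<Rightarrow> 'b" and d1 :: "'b \<Rightarrow> 'c::real_inner"
  assumes V0: "fin_dim_subspace V0" and V1: "fin_dim_subspace V1"
    and d0_lin: "linear_on_dom V0 d0" and d1_lin: "linear_on_dom V1 d1"
    and d0_into: "\<And>\<sigma>. \<sigma> \<in> V0 \<Longrightarrow> d0 \<sigma> \<in> V1"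
    and complex: "\<And>\<sigma>. \<sigma> \<in> V0 \<Longrightarrow> d1 (d0 \<sigma>) = 0"
begin

abbreviation "H \<equiv> harmonic V0 V1 d0 d1"
abbreviation "P \<equiv> orth_proj H"

lemma V0_subspace: "subspace V0" and V1_subspace: "subspace V1"
  using V0 V1 by (simp_all add: fin_dim_subspace_def)

lemma d0_0 [simp]: "d0 0 = 0" and d1_0 [simp]: "d1 0 = 0"
  using linear_on_dom_zero d0_lin d1_lin V0_subspace V1_subspace by blast+

lemma d0_scale: "\<sigma> \<in> V0 \<Longrightarrow> d0 (c *\<^sub>R \<sigma>) = c *\<^sub>R d0 \<sigma>"
  using linear_on_dom_scale[OF d0_lin] .

lemma d1_scale: "v \<in> V1 \<Longrightarrow> d1 (c *\<^sub>R v) = c *\<^sub>R d1 v"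
  using linear_on_dom_scale[OF d1_lin] .

lemma range_subspace: "subspace (d0 ` V0)"
  using V0_subspace linear_on_dom_add[OF d0_lin] d0_scale unfolding subspace_def
  by (auto simp: image_iff) (metis d0_0 subspace_0[OF V0_subspace], metis, metis)

lemma harmonicD:
  assumes "h \<in> H"
  shows harmonic_in_V1: "h \<in> V1" and harmonic_d1: "d1 h = 0"
    and harmonic_orth_range: "\<sigma> \<in> V0 \<Longrightarrow> inner h (d0 \<sigma>) = 0"
  using assms by (simp_all add: harmonic_def)

lemma harmonic_subspace: "subspace H"
  using V1_subspace linear_on_dom_add[OF d1_lin] d1_scale
  unfolding subspace_def harmonic_def by (auto simp: inner_add_left)

lemma harmonic_fin_dim: "fin_dim_subspace H"
  using harmonic_subspace harmonic_in_V1 by (blast intro: fin_dim_subspace_subset[OF V1])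

lemma Zperp1_orth_harmonic: "w \<in> Zperp V1 d1 \<Longrightarrow> h \<in> H \<Longrightarrow> inner w h = 0"
  using Zperp_kernel_orthogonal harmonic_in_V1 harmonic_d1 by blast

lemma Zperp1_orth_range: "w \<in> Zperp V1 d1 \<Longrightarrow> \<sigma> \<in> V0 \<Longrightarrow> inner w (d0 \<sigma>) = 0"
  using Zperp_kernel_orthogonal d0_into complex by blast

lemma orth_proj_hodge:
  assumes "\<rho> \<in> V0" "h \<in> H" "w \<in> Zperp V1 d1"
  shows "P (d0 \<rho> + h + w) = h"
proof (rule orth_proj_eqI[OF harmonic_subspace assms(2)])
  fix s assume "s \<in> H"
  then show "inner (d0 \<rho> + h + w - h) s = 0"
    using harmonic_orth_range[OF \<open>s \<in> H\<close> assms(1)] Zperp1_orth_harmonic[OF assms(3) \<open>s \<in> H\<close>]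
    by (simp add: inner_add_left inner_add_right inner_commute)
qed

text \<open>The residual of \<open>x\<close> after projecting onto the range is harmonic and orthogonal to
  \<open>H\<close>, hence zero.\<close>
lemma kernel_orth_harmonic_in_range:
  assumes "x \<in> V1" "d1 x = 0" "\<And>h. h \<in> H \<Longrightarrow> inner x h = 0"
  obtains \<rho> where "\<rho> \<in> V0" "x = d0 \<rho>"
proof -
  let ?R = "d0 ` V0"
  have R: "fin_dim_subspace ?R"
    using range_subspace d0_into by (blast intro: fin_dim_subspace_subset[OF V1])
  obtain y where y: "y \<in> ?R" "\<And>s. s \<in> ?R \<Longrightarrow> inner (x - y) s = 0"
    by (rule orthogonal_projection_exists[OF R, where x = x]) blast
  obtain \<rho> where \<rho>: "\<rho> \<in> V0" "y = d0 \<rho>" using y(1) by blast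
  have "x - y \<in> H"
    unfolding harmonic_def using assms(1,2) \<rho> y(2) d0_into complex V1_subspace
    linear_on_dom_diff[OF d1_lin V1_subspace] by (auto simp: subspace_diff)
  then have "inner x (x - y) = 0" "inner (x - y) y = 0" using assms(3) y by auto
  moreover have "inner (x - y) (x - y) = inner x (x - y) - inner (x - y) y"
    by (simp add: inner_diff_left inner_commute)
  ultimately have "inner (x - y) (x - y) = 0" by simp
  then show ?thesis using that \<rho> by simp
qed

lemma hodge_decomposition:
  assumes "v \<in> V1"
  obtains \<rho> h w where "\<rho> \<in> V0" "h \<in> H" "w \<in> Zperp V1 d1" "v = d0 \<rho> + h + w"
proof -
  obtain z where z: "z \<in> V1" "d1 z = 0" "v - z \<in> Zperp V1 d1"
    using Zperp_decomposition[OF V1 d1_lin assms] by blast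
  have "z - P z \<in> V1" "d1 (z - P z) = 0" "\<And>h. h \<in> H \<Longrightarrow> inner (z - P z) h = 0"
    using z orth_proj_fin_dim[OF harmonic_fin_dim] harmonic_in_V1 harmonic_d1 V1_subspace
      linear_on_dom_diff[OF d1_lin V1_subspace] by (auto simp: subspace_diff)
  then obtain \<rho> where "\<rho> \<in> V0" "z - P z = d0 \<rho>" by (rule kernel_orth_harmonic_in_range)
  moreover have "v = (z - P z) + P z + (v - z)" by simp
  ultimately show ?thesis using that orth_proj_in[OF harmonic_fin_dim] z(3) by metis
qed

lemma zero_mem [simp]: "0 \<in> V0" "0 \<in> V1" "0 \<in> H" "0 \<in> Zperp V1 d1"
  using V0_subspace V1_subspace harmonic_subspace subspace_Zperp[OF V1_subspace, of d1]
  by (simp_all add: subspace_0)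

lemma orth_proj_range [simp]: "\<sigma> \<in> V0 \<Longrightarrow> P (c *\<^sub>R d0 \<sigma>) = 0"
  using orth_proj_hodge[of "c *\<^sub>R \<sigma>" 0 0] subspace_scale[OF V0_subspace] by (simp add: d0_scale)

lemma orth_proj_Zperp1 [simp]: "w \<in> Zperp V1 d1 \<Longrightarrow> P w = 0"
  using orth_proj_hodge[of 0 0 w] by simp

lemma orth_proj_harmonic [simp]: "h \<in> H \<Longrightarrow> P h = h"
  using orth_proj_hodge[of 0 h 0] by simp

lemma inner_harmonic_orth_proj: "h \<in> H \<Longrightarrow> inner h (P v) = inner h v"
  using orth_proj_orthogonal[OF harmonic_fin_dim, of h v]
  by (simp add: inner_diff_left inner_diff_right inner_commute)

lemma d1_range [simp]: "\<sigma> \<in> V0 \<Longrightarrow> d1 (c *\<^sub>R d0 \<sigma>) = 0"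
  using d1_scale d0_into complex by simp

end

section \<open>Eigenpairs of the mixed problem\<close>

lemma is_eigenpairI:
  assumes "x \<in> mixed_space V0 V1 d0 d1" "x \<noteq> 0"
    and "\<And>\<tau> v q. \<tau> \<in> V0 \<Longrightarrow> v \<in> V1 \<Longrightarrow> q \<in> harmonic V0 V1 d0 d1 \<Longrightarrow>
      formA d0 d1 x (\<tau>, v, q) = lam * formB V0 V1 d0 d1 \<gamma> x (\<tau>, v, q)"
  shows "is_eigenpair V0 V1 d0 d1 \<gamma> lam x"
  using assms by (auto simp: is_eigenpair_def mixed_space_def)

locale mixed_eigenproblem = fin_dim_complex +
  fixes \<gamma> :: real
  assumes gamma_pos: "\<gamma> > 0"
begin

abbreviation "A \<equiv> formA d0 d1"
abbreviation "B \<equiv> formB V0 V1 d0 d1 \<gamma>"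
abbreviation "listed lam \<equiv> {x. (x, lam) \<in> listed_eigenpairs V0 V1 d0 d1 \<gamma>}"

lemma exact_eigenpair:
  assumes "\<sigma> \<in> V0" "\<sigma> \<noteq> 0"
  shows "is_eigenpair V0 V1 d0 d1 \<gamma> (-1) (\<sigma>, - \<gamma> *\<^sub>R d0 \<sigma>, 0)"
proof (rule is_eigenpairI)
  show "(\<sigma>, - \<gamma> *\<^sub>R d0 \<sigma>, 0) \<in> mixed_space V0 V1 d0 d1"
    using assms d0_into V1_subspace by (simp add: mixed_space_def subspace_scale subspace_neg)
  show "(\<sigma>, - \<gamma> *\<^sub>R d0 \<sigma>, 0) \<noteq> 0" using assms by (simp add: zero_prod_def)
  fix \<tau> v q assume "\<tau> \<in> V0" "v \<in> V1" "q \<in> H"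
  have "P (- \<gamma> *\<^sub>R d0 \<sigma>) = 0" "d1 (- \<gamma> *\<^sub>R d0 \<sigma>) = 0"
    using orth_proj_range d1_range assms(1) by (metis scaleR_minus_left)+
  moreover have "inner (d0 \<sigma>) q = 0" "inner (d0 \<sigma>) (P v) = 0"
    using harmonic_orth_range[OF \<open>q \<in> H\<close> assms(1)]
      harmonic_orth_range[OF orth_proj_in[OF harmonic_fin_dim] assms(1)]
    by (simp_all add: inner_commute)
  ultimately show "A (\<sigma>, - \<gamma> *\<^sub>R d0 \<sigma>, 0) (\<tau>, v, q) = -1 * B (\<sigma>, - \<gamma> *\<^sub>R d0 \<sigma>, 0) (\<tau>, v, q)"
    using gamma_pos by (simp add: formA_def formB_def Let_def inner_diff_right field_simps)
qed

lemma harmonic_eigenpair: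
  assumes "p \<in> H" "p \<noteq> 0" "l \<in> {1, -1}"
  shows "is_eigenpair V0 V1 d0 d1 \<gamma> l (0, l *\<^sub>R p, p)"
proof (rule is_eigenpairI)
  have "l *\<^sub>R p \<in> H" using assms(1) harmonic_subspace by (simp add: subspace_scale)
  then show "(0, l *\<^sub>R p, p) \<in> mixed_space V0 V1 d0 d1"
    using assms(1) harmonic_in_V1 by (simp add: mixed_space_def)
  show "(0, l *\<^sub>R p, p) \<noteq> 0" using assms by (simp add: zero_prod_def)
  fix \<tau> v q assume "\<tau> \<in> V0" "v \<in> V1" "q \<in> H"
  have "P (l *\<^sub>R p) = l *\<^sub>R p" "d1 (l *\<^sub>R p) = 0"
    using \<open>l *\<^sub>R p \<in> H\<close> harmonic_d1 by simp_all
  moreover have "inner p (d0 \<tau>) = 0" "inner p (P v) = inner p v" "l * l = 1"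
    using harmonic_orth_range inner_harmonic_orth_proj assms \<open>\<tau> \<in> V0\<close> by auto
  ultimately show "A (0, l *\<^sub>R p, p) (\<tau>, v, q) = l * B (0, l *\<^sub>R p, p) (\<tau>, v, q)"
    by (simp add: formA_def formB_def Let_def algebra_simps)
qed

lemma coexact_eigenpair:
  assumes "u \<in> Zperp V1 d1" "u \<noteq> 0" "\<mu> > 0"
    and eq: "\<And>v. v \<in> Zperp V1 d1 \<Longrightarrow> inner (d1 u) (d1 v) = \<mu> * inner u v"
  shows "is_eigenpair V0 V1 d0 d1 \<gamma> (\<mu> * \<gamma> / (\<mu> * \<gamma> + 1)) (0, u, 0)"
proof (rule is_eigenpairI)
  show "(0, u, 0) \<in> mixed_space V0 V1 d0 d1"
    using assms(1) Zperp_subset by (auto simp: mixed_space_def)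
  show "(0, u, 0) \<noteq> 0" using assms by (simp add: zero_prod_def)
  fix \<tau> v q assume "\<tau> \<in> V0" "v \<in> V1" "q \<in> H"
  have "inner (d1 u) (d1 v) = \<mu> * inner u v"
    using Zperp_eigen_equation_extends[OF V1 d1_lin assms(1) \<open>v \<in> V1\<close> eq] .
  moreover have "inner u (d0 \<tau>) = 0" "inner u q = 0" "inner u (P v) = 0"
    using Zperp1_orth_range Zperp1_orth_harmonic orth_proj_in[OF harmonic_fin_dim]
      assms(1) \<open>\<tau> \<in> V0\<close> \<open>q \<in> H\<close> by auto
  ultimately have "A (0, u, 0) (\<tau>, v, q) = \<mu> * inner u v"
    and "B (0, u, 0) (\<tau>, v, q) = (inverse \<gamma> + \<mu>) * inner u v"
    using assms(1) by (simp_all add: formA_def formB_def Let_def inner_diff_right algebra_simps)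
  moreover have "\<mu> * \<gamma> / (\<mu> * \<gamma> + 1) * (inverse \<gamma> + \<mu>) = \<mu>"
  proof -
    have "\<mu> * \<gamma> + 1 > 0" using gamma_pos assms(3) by (simp add: add_pos_pos)
    moreover have "inverse \<gamma> + \<mu> = (\<mu> * \<gamma> + 1) / \<gamma>" using gamma_pos by (simp add: field_simps)
    ultimately show ?thesis using gamma_pos by simp
  qed
  ultimately show "A (0, u, 0) (\<tau>, v, q) = \<mu> * \<gamma> / (\<mu> * \<gamma> + 1) * B (0, u, 0) (\<tau>, v, q)"
    by (metis mult.assoc)
qed

lemma coexact_potential_eigenpair:
  assumes "\<sigma> \<in> Zperp V0 d0" "\<sigma> \<noteq> 0" "\<nu> > 0"
    and eq: "\<And>\<tau>. \<tau> \<in> Zperp V0 d0 \<Longrightarrow> inner (d0 \<sigma>) (d0 \<tau>) = \<nu> * inner \<sigma> \<tau>"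
  defines "lam \<equiv> \<nu> * \<gamma> / (\<nu> * \<gamma> + 1)"
  shows "is_eigenpair V0 V1 d0 d1 \<gamma> lam (\<sigma>, (\<gamma> / lam) *\<^sub>R d0 \<sigma>, 0)"
proof (rule is_eigenpairI)
  define c where "c = \<gamma> / lam"
  have \<sigma>: "\<sigma> \<in> V0" using assms(1) Zperp_subset by blast
  show "(\<sigma>, c *\<^sub>R d0 \<sigma>, 0) \<in> mixed_space V0 V1 d0 d1"
    using \<sigma> d0_into V1_subspace by (simp add: mixed_space_def subspace_scale)
  show "(\<sigma>, c *\<^sub>R d0 \<sigma>, 0) \<noteq> 0" using assms by (simp add: zero_prod_def)
  fix \<tau> v q assume "\<tau> \<in> V0" "v \<in> V1" "q \<in> H"
  have "inner (d0 \<sigma>) (d0 \<tau>) = \<nu> * inner \<sigma> \<tau>"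
    using Zperp_eigen_equation_extends[OF V0 d0_lin assms(1) \<open>\<tau> \<in> V0\<close> eq] .
  moreover have "inner (d0 \<sigma>) q = 0" "inner (d0 \<sigma>) (P v) = 0"
    using harmonic_orth_range[OF \<open>q \<in> H\<close> \<sigma>]
      harmonic_orth_range[OF orth_proj_in[OF harmonic_fin_dim] \<sigma>]
    by (simp_all add: inner_commute)
  ultimately have A_eq: "A (\<sigma>, c *\<^sub>R d0 \<sigma>, 0) (\<tau>, v, q) = inner (d0 \<sigma>) v + (c * \<nu> - 1) * inner \<sigma> \<tau>"
    and B_eq: "B (\<sigma>, c *\<^sub>R d0 \<sigma>, 0) (\<tau>, v, q) = c / \<gamma> * inner (d0 \<sigma>) v + (1 + \<gamma> * \<nu>) * inner \<sigma> \<tau>"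
    using \<sigma> by (simp_all add: formA_def formB_def Let_def inner_diff_right algebra_simps divide_inverse)
  have r: "lam * (c / \<gamma>) = 1" "lam * (1 + \<gamma> * \<nu>) = c * \<nu> - 1"
  proof -
    have pos: "\<nu> * \<gamma> > 0" "\<nu> * \<gamma> + 1 > 0" "\<gamma> * (\<nu> * \<gamma> + 1) > 0"
      using gamma_pos assms(3) by (simp_all add: add_pos_pos)
    then have "c = (\<nu> * \<gamma> + 1) / \<nu>"
      using gamma_pos assms(3) unfolding c_def lam_def by (simp add: field_simps)
    then show "lam * (c / \<gamma>) = 1" "lam * (1 + \<gamma> * \<nu>) = c * \<nu> - 1"
      using pos gamma_pos assms(3) unfolding lam_def by (simp_all add: field_simps)
  qed
  have "lam * B (\<sigma>, c *\<^sub>R d0 \<sigma>, 0) (\<tau>, v, q)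
      = lam * (c / \<gamma>) * inner (d0 \<sigma>) v + lam * (1 + \<gamma> * \<nu>) * inner \<sigma> \<tau>"
    unfolding B_eq by (simp add: algebra_simps)
  also have "\<dots> = A (\<sigma>, c *\<^sub>R d0 \<sigma>, 0) (\<tau>, v, q)" unfolding A_eq r by simp
  finally show "A (\<sigma>, c *\<^sub>R d0 \<sigma>, 0) (\<tau>, v, q) = lam * B (\<sigma>, c *\<^sub>R d0 \<sigma>, 0) (\<tau>, v, q)" ..
qed

lemma listed_exact_span:
  assumes "\<sigma> \<in> V0"
  shows "(\<sigma>, - \<gamma> *\<^sub>R d0 \<sigma>, 0) \<in> span (listed (-1))"
proof (cases "\<sigma> = 0")
  case True
  then show ?thesis by (simp add: span_zero flip: zero_prod_def)
next
  case False
  then show ?thesis using assms by (intro span_base) (auto simp: listed_eigenpairs_def)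
qed

lemma listed_harmonic_span:
  assumes "p \<in> H" "l \<in> {1, -1}"
  shows "(0, l *\<^sub>R p, p) \<in> span (listed l)"
proof (cases "p = 0")
  case True
  then show ?thesis by (simp add: span_zero flip: zero_prod_def)
next
  case False
  then show ?thesis using assms by (intro span_base) (auto simp: listed_eigenpairs_def)
qed

lemma listed_coexact_span:
  assumes "w \<in> Zperp V1 d1" and eq: "\<And>v. v \<in> Zperp V1 d1 \<Longrightarrow> inner (d1 w) (d1 v) = m * inner w v"
  shows "(0, w, 0) \<in> span (listed (m * \<gamma> / (m * \<gamma> + 1)))"
proof (cases "w = 0")
  case True
  then show ?thesis by (simp add: span_zero flip: zero_prod_def)
next
  case False
  then have "m > 0" using Zperp_rayleigh_pos assms by blast
  then show ?thesis using assms False by (intro span_base) (auto simp: listed_eigenpairs_def)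
qed

lemma listed_coexact_potential_span:
  assumes "\<sigma> \<in> Zperp V0 d0"
    and eq: "\<And>\<tau>. \<tau> \<in> Zperp V0 d0 \<Longrightarrow> inner (d0 \<sigma>) (d0 \<tau>) = m * inner \<sigma> \<tau>"
  defines "lam \<equiv> m * \<gamma> / (m * \<gamma> + 1)"
  shows "(\<sigma>, (\<gamma> / lam) *\<^sub>R d0 \<sigma>, 0) \<in> span (listed lam)"
proof (cases "\<sigma> = 0")
  case True
  then show ?thesis by (simp add: span_zero flip: zero_prod_def)
next
  case False
  then have "m > 0" using Zperp_rayleigh_pos assms by blast
  then show ?thesis
    using assms False unfolding lam_def by (intro span_base) (auto simp: listed_eigenpairs_def)
qed

lemma listed_is_eigenpair:
  "(x, lam) \<in> listed_eigenpairs V0 V1 d0 d1 \<gamma> \<Longrightarrow> is_eigenpair V0 V1 d0 d1 \<gamma> lam x"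
  unfolding listed_eigenpairs_def
  using exact_eigenpair harmonic_eigenpair coexact_eigenpair coexact_potential_eigenpair
  by auto

lemma listed_in_mixed_space: "fst ` listed_eigenpairs V0 V1 d0 d1 \<gamma> \<subseteq> mixed_space V0 V1 d0 d1"
  using listed_is_eigenpair by (force simp: is_eigenpair_def)

lemma listed_span_subset: "span (listed lam) \<subseteq> span (fst ` listed_eigenpairs V0 V1 d0 d1 \<gamma>)"
  by (rule span_mono) force

definition middle_span :: "'b set" where
  "middle_span = {v. (0::'a, v, 0::'b) \<in> span (fst ` listed_eigenpairs V0 V1 d0 d1 \<gamma>)}"

lemma subspace_middle_span: "subspace middle_span"
  using subspace_linear_on_dom_vimage[of UNIV "\<lambda>v. (0::'a, v, 0::'b)"
      "span (fst ` listed_eigenpairs V0 V1 d0 d1 \<gamma>)"]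
  by (simp add: middle_span_def linear_on_dom_def zero_prod_def)

lemma middle_span_listedI: "(0, v, 0) \<in> span (listed lam) \<Longrightarrow> v \<in> middle_span"
  using listed_span_subset by (auto simp: middle_span_def)

lemma harmonic_middle_span:
  assumes "h \<in> H"
  shows "h \<in> middle_span"
proof -
  have "(1/2) *\<^sub>R (0, 1 *\<^sub>R h, h) \<in> span (listed 1)"
    and "(1/2) *\<^sub>R (0, (-1) *\<^sub>R h, h) \<in> span (listed (-1))"
    by (intro span_scale listed_harmonic_span[OF assms]; simp)+
  then have "(1/2) *\<^sub>R (0, 1 *\<^sub>R h, h) - (1/2) *\<^sub>R (0, (-1) *\<^sub>R h, h)
      \<in> span (fst ` listed_eigenpairs V0 V1 d0 d1 \<gamma>)"
    using listed_span_subset by (intro span_diff) blast+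
  then show ?thesis by (simp add: middle_span_def flip: scaleR_add_left)
qed

lemma Zperp1_middle_span: "Zperp V1 d1 \<subseteq> middle_span"
proof -
  have "Zperp V1 d1 \<subseteq> span {w \<in> Zperp V1 d1. w \<noteq> 0 \<and>
      (\<exists>\<mu>>0. \<forall>v\<in>Zperp V1 d1. inner (d1 w) (d1 v) = \<mu> * inner w v)}"
    by (rule Zperp_eigenvectors_span[OF V1 d1_lin])
  also have "\<dots> \<subseteq> middle_span"
    using listed_coexact_span
    by (intro span_minimal subspace_middle_span) (force intro: middle_span_listedI)
  finally show ?thesis .
qed

text \<open>The two listed eigenvectors \<open>(s, c d0 s, 0)\<close> and \<open>(s, -\<gamma> d0 s, 0)\<close> differ by a nonzero
  multiple of \<open>(0, d0 s, 0)\<close>.\<close>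
lemma coexact_potential_middle_span:
  assumes s: "s \<in> Zperp V0 d0" "\<nu> > 0"
    and eq: "\<And>\<tau>. \<tau> \<in> Zperp V0 d0 \<Longrightarrow> inner (d0 s) (d0 \<tau>) = \<nu> * inner s \<tau>"
  shows "d0 s \<in> middle_span"
proof -
  define S where "S = span (fst ` listed_eigenpairs V0 V1 d0 d1 \<gamma>)"
  define c where "c = \<gamma> / (\<nu> * \<gamma> / (\<nu> * \<gamma> + 1))"
  have "c > 0" using gamma_pos s(2) by (simp add: c_def add_pos_pos)
  have sV: "s \<in> V0" using s(1) Zperp_subset by blast
  have "(s, c *\<^sub>R d0 s, 0) - (s, - \<gamma> *\<^sub>R d0 s, 0) \<in> S"
    using listed_coexact_potential_span[OF s(1) eq] listed_exact_span[OF sV] listed_span_subset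
    unfolding S_def c_def by (intro span_diff) blast+
  then have "inverse (c + \<gamma>) *\<^sub>R ((s, c *\<^sub>R d0 s, 0) - (s, - \<gamma> *\<^sub>R d0 s, 0)) \<in> S"
    unfolding S_def by (rule span_scale)
  moreover have "inverse (c + \<gamma>) *\<^sub>R ((s, c *\<^sub>R d0 s, 0) - (s, - \<gamma> *\<^sub>R d0 s, 0)) = (0, d0 s, 0)"
    using \<open>c > 0\<close> gamma_pos by (simp flip: scaleR_add_left)
  ultimately show ?thesis by (simp add: middle_span_def S_def)
qed

lemma range_middle_span:
  assumes \<rho>: "\<rho> \<in> V0"
  shows "d0 \<rho> \<in> middle_span"
proof -
  have "Zperp V0 d0 \<subseteq> span {s \<in> Zperp V0 d0. s \<noteq> 0 \<and>
      (\<exists>\<nu>>0. \<forall>\<tau>\<in>Zperp V0 d0. inner (d0 s) (d0 \<tau>) = \<nu> * inner s \<tau>)}"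
    by (rule Zperp_eigenvectors_span[OF V0 d0_lin])
  also have "\<dots> \<subseteq> {\<sigma> \<in> V0. d0 \<sigma> \<in> middle_span}"
    using coexact_potential_middle_span Zperp_subset
    by (intro span_minimal subspace_linear_on_dom_vimage[OF V0_subspace d0_lin subspace_middle_span])
      blast
  finally have Zperp0: "Zperp V0 d0 \<subseteq> {\<sigma> \<in> V0. d0 \<sigma> \<in> middle_span}" .
  obtain z where z: "z \<in> V0" "d0 z = 0" "\<rho> - z \<in> Zperp V0 d0"
    using Zperp_decomposition[OF V0 d0_lin \<rho>] by blast
  then have "d0 \<rho> = d0 (\<rho> - z)" using linear_on_dom_diff[OF d0_lin V0_subspace \<rho>] by simp
  then show ?thesis using Zperp0 z(3) by auto
qed

lemma V1_middle_span: "V1 \<subseteq> middle_span"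
proof
  fix v assume "v \<in> V1"
  then obtain \<rho> h w where "\<rho> \<in> V0" "h \<in> H" "w \<in> Zperp V1 d1" "v = d0 \<rho> + h + w"
    by (rule hodge_decomposition)
  then show "v \<in> middle_span"
    using range_middle_span harmonic_middle_span Zperp1_middle_span subspace_middle_span
    by (auto intro!: subspace_add)
qed

lemma mixed_space_subspace: "subspace (mixed_space V0 V1 d0 d1)"
  unfolding mixed_space_def
  using V0_subspace V1_subspace harmonic_subspace by (intro subspace_Times)

lemma mixed_space_span_listed:
  "mixed_space V0 V1 d0 d1 \<subseteq> span (fst ` listed_eigenpairs V0 V1 d0 d1 \<gamma>)"
proof (clarsimp simp: mixed_space_def)
  define S where "S = span (fst ` listed_eigenpairs V0 V1 d0 d1 \<gamma>)"
  fix \<sigma> u p assume "\<sigma> \<in> V0" "u \<in> V1" "p \<in> H"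
  have "(\<sigma>, - \<gamma> *\<^sub>R d0 \<sigma>, 0) \<in> S" "(0, 1 *\<^sub>R p, p) \<in> S"
    using listed_exact_span[OF \<open>\<sigma> \<in> V0\<close>] listed_harmonic_span[OF \<open>p \<in> H\<close>, of 1]
    using listed_span_subset unfolding S_def by auto
  moreover have "u + \<gamma> *\<^sub>R d0 \<sigma> - p \<in> V1"
    using \<open>\<sigma> \<in> V0\<close> \<open>u \<in> V1\<close> harmonic_in_V1[OF \<open>p \<in> H\<close>] d0_into V1_subspace
    by (intro subspace_diff subspace_add subspace_scale) auto
  then have "(0, u + \<gamma> *\<^sub>R d0 \<sigma> - p, 0) \<in> S"
    using V1_middle_span unfolding S_def middle_span_def by blast
  ultimately have "(\<sigma>, - \<gamma> *\<^sub>R d0 \<sigma>, 0) + (0, 1 *\<^sub>R p, p) + (0, u + \<gamma> *\<^sub>R d0 \<sigma> - p, 0) \<in> S"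
    unfolding S_def by (intro span_add)
  then show "(\<sigma>, u, p) \<in> S" by simp
qed

lemma listed_basis:
  "\<exists>B \<subseteq> fst ` listed_eigenpairs V0 V1 d0 d1 \<gamma>. independent B \<and> span B = mixed_space V0 V1 d0 d1"
proof -
  obtain B where B: "B \<subseteq> fst ` listed_eigenpairs V0 V1 d0 d1 \<gamma>" "independent B"
    "fst ` listed_eigenpairs V0 V1 d0 d1 \<gamma> \<subseteq> span B"
    using maximal_independent_subset by blast
  have "span B \<subseteq> mixed_space V0 V1 d0 d1"
    using B(1) listed_in_mixed_space mixed_space_subspace by (metis span_minimal subset_trans)
  moreover have "mixed_space V0 V1 d0 d1 \<subseteq> span B"
    using mixed_space_span_listed span_minimal[OF B(3) subspace_span] by blast
  ultimately show ?thesis using B(1,2) by blast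
qed

context
  fixes lam \<sigma> \<rho> h w p
  assumes ep: "is_eigenpair V0 V1 d0 d1 \<gamma> lam (\<sigma>, d0 \<rho> + h + w, p)"
    and \<rho>: "\<rho> \<in> V0" and h: "h \<in> H" and w: "w \<in> Zperp V1 d1"
begin

private lemma \<sigma>_V0: "\<sigma> \<in> V0" and p_H: "p \<in> H"
  using ep by (auto simp: is_eigenpair_def mixed_space_def)

private lemma w_V1: "w \<in> V1"
  using w Zperp_subset by blast

private lemma eigenpair_equation:
  "\<tau> \<in> V0 \<Longrightarrow> v \<in> V1 \<Longrightarrow> q \<in> H \<Longrightarrow>
    A (\<sigma>, d0 \<rho> + h + w, p) (\<tau>, v, q) = lam * B (\<sigma>, d0 \<rho> + h + w, p) (\<tau>, v, q)"
  using ep by (auto simp: is_eigenpair_def mixed_space_def)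

private lemma d1_u: "d1 (d0 \<rho> + h + w) = d1 w"
  using linear_on_dom_add[OF d1_lin] d0_into[OF \<rho>] harmonic_in_V1[OF h] w_V1 V1_subspace
    complex[OF \<rho>] harmonic_d1[OF h] by (simp add: subspace_add)

lemma eigenpair_harmonic_parts: "h = lam *\<^sub>R p" "p = lam *\<^sub>R h"
proof -
  have "inner h q = inner (lam *\<^sub>R p) q" if q: "q \<in> H" for q
  proof -
    have "inner (d0 \<rho>) q = 0" "inner w q = 0"
      using harmonic_orth_range[OF q \<rho>] Zperp1_orth_harmonic[OF w q]
      by (simp_all add: inner_commute)
    then have "A (\<sigma>, d0 \<rho> + h + w, p) (0, 0, q) = inner h q"
      by (simp add: formA_def inner_add_left)
    moreover have "B (\<sigma>, d0 \<rho> + h + w, p) (0, 0, q) = inner p q"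
      by (simp add: formB_def Let_def)
    ultimately show ?thesis using eigenpair_equation[of 0 0 q] q by simp
  qed
  then show "h = lam *\<^sub>R p"
    by (rule eq_if_inner_eq_on_subspace[OF harmonic_subspace h subspace_scale[OF harmonic_subspace p_H]])
  have "inner p v = inner (lam *\<^sub>R h) v" if v: "v \<in> H" for v
  proof -
    have "inner (d0 \<sigma>) v = 0"
      using harmonic_orth_range[OF v \<sigma>_V0] by (simp add: inner_commute)
    then have "A (\<sigma>, d0 \<rho> + h + w, p) (0, v, 0) = inner p v"
      using harmonic_d1[OF v] by (simp add: formA_def)
    moreover have "B (\<sigma>, d0 \<rho> + h + w, p) (0, v, 0) = inner h v"
      using harmonic_d1[OF v] v orth_proj_hodge[OF \<rho> h w] by (simp add: formB_def Let_def)
    ultimately show ?thesis using eigenpair_equation[of 0 v 0] v harmonic_in_V1 by simp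
  qed
  then show "p = lam *\<^sub>R h"
    by (rule eq_if_inner_eq_on_subspace[OF harmonic_subspace p_H subspace_scale[OF harmonic_subspace h]])
qed

lemma eigenpair_coexact_part:
  assumes v: "v \<in> Zperp V1 d1"
  shows "inner (d1 w) (d1 v) = lam * (inner w v / \<gamma> + inner (d1 w) (d1 v))"
proof -
  have "inner (d0 \<sigma>) v = 0" "inner p v = 0" "inner (d0 \<rho>) v = 0"
    using Zperp1_orth_range[OF v] Zperp1_orth_harmonic[OF v] \<sigma>_V0 \<rho> p_H
    by (simp_all add: inner_commute)
  then have "A (\<sigma>, d0 \<rho> + h + w, p) (0, v, 0) = inner (d1 w) (d1 v)"
    and "B (\<sigma>, d0 \<rho> + h + w, p) (0, v, 0) = inner w v / \<gamma> + inner (d1 w) (d1 v)"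
    using orth_proj_hodge[OF \<rho> h w] orth_proj_Zperp1[OF v] d1_u
    by (simp_all add: formA_def formB_def Let_def inner_add_left divide_inverse_commute)
  then show ?thesis using eigenpair_equation[of 0 v 0] subsetD[OF Zperp_subset v] by simp
qed

lemma eigenpair_exact_part: "lam *\<^sub>R d0 \<rho> = \<gamma> *\<^sub>R d0 \<sigma>"
proof -
  have "inner (lam *\<^sub>R d0 \<rho>) (d0 \<tau>) = inner (\<gamma> *\<^sub>R d0 \<sigma>) (d0 \<tau>)" if \<tau>: "\<tau> \<in> V0" for \<tau>
  proof -
    have "inner p (d0 \<tau>) = 0" "inner w (d0 \<tau>) = 0" "P (d0 \<tau>) = 0"
      using harmonic_orth_range[OF p_H \<tau>] Zperp1_orth_range[OF w \<tau>] orth_proj_range[OF \<tau>, of 1]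
      by simp_all
    then have "A (\<sigma>, d0 \<rho> + h + w, p) (0, d0 \<tau>, 0) = inner (d0 \<sigma>) (d0 \<tau>)"
      and "B (\<sigma>, d0 \<rho> + h + w, p) (0, d0 \<tau>, 0) = inner (d0 \<rho>) (d0 \<tau>) / \<gamma>"
      using complex[OF \<tau>] orth_proj_hodge[OF \<rho> h w]
      by (simp_all add: formA_def formB_def Let_def inner_add_left divide_inverse_commute)
    then have "inner (d0 \<sigma>) (d0 \<tau>) = lam * (inner (d0 \<rho>) (d0 \<tau>) / \<gamma>)"
      using eigenpair_equation[of 0 "d0 \<tau>" 0] d0_into[OF \<tau>] by simp
    then show ?thesis using gamma_pos by (simp add: field_simps)
  qed
  moreover have "lam *\<^sub>R d0 \<rho> \<in> d0 ` V0" "\<gamma> *\<^sub>R d0 \<sigma> \<in> d0 ` V0"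
    using range_subspace \<rho> \<sigma>_V0 by (simp_all add: subspace_scale)
  ultimately show ?thesis by (blast intro: eq_if_inner_eq_on_subspace[OF range_subspace])
qed

lemma eigenpair_potential_part:
  assumes \<tau>: "\<tau> \<in> V0"
  shows "inner (d0 \<rho>) (d0 \<tau>) - inner \<sigma> \<tau> = lam * (inner \<sigma> \<tau> + \<gamma> * inner (d0 \<sigma>) (d0 \<tau>))"
proof -
  have "inner (d0 \<rho> + h + w) (d0 \<tau>) = inner (d0 \<rho>) (d0 \<tau>)"
    using harmonic_orth_range[OF h \<tau>] Zperp1_orth_range[OF w \<tau>] by (simp add: inner_add_left)
  then show ?thesis using eigenpair_equation[OF \<tau>, of 0 0] by (simp add: formA_def formB_def Let_def)
qed

lemma eigenpair_minus_one_in_span: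
  assumes "lam = -1"
  shows "(\<sigma>, d0 \<rho> + h + w, p) \<in> span (listed lam)"
proof -
  have "inner (d1 w) (d1 w) = - (inner w w / \<gamma> + inner (d1 w) (d1 w))"
    using eigenpair_coexact_part[OF w] assms by simp
  then have "inner w w / \<gamma> \<le> 0" using inner_ge_zero[of "d1 w"] by linarith
  then have "inner w w \<le> 0" using gamma_pos by (simp add: divide_le_0_iff)
  then have "w = 0" by (metis inner_ge_zero inner_eq_zero_iff order.antisym)
  moreover have "- d0 \<rho> = \<gamma> *\<^sub>R d0 \<sigma>" using eigenpair_exact_part assms by simp
  then have "d0 \<rho> = - \<gamma> *\<^sub>R d0 \<sigma>" by (metis minus_minus scaleR_minus_left)
  moreover have "h = (-1) *\<^sub>R p" using eigenpair_harmonic_parts(1) assms by simp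
  ultimately have "(\<sigma>, d0 \<rho> + h + w, p) = (\<sigma>, - \<gamma> *\<^sub>R d0 \<sigma>, 0) + (0, (-1) *\<^sub>R p, p)" by simp
  also have "\<dots> \<in> span (listed lam)"
    using listed_exact_span[OF \<sigma>_V0] listed_harmonic_span[OF p_H, of "-1"] assms
    by (intro span_add) auto
  finally show ?thesis .
qed

lemma eigenpair_one_in_span:
  assumes "lam = 1"
  shows "(\<sigma>, d0 \<rho> + h + w, p) \<in> span (listed lam)"
proof -
  have "w = 0" using eigenpair_coexact_part[OF w] assms gamma_pos by simp
  have d0\<rho>: "d0 \<rho> = \<gamma> *\<^sub>R d0 \<sigma>" using eigenpair_exact_part assms by simp
  then have "inner \<sigma> \<sigma> = 0" using eigenpair_potential_part[OF \<sigma>_V0] assms by simp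
  then have "\<sigma> = 0" by simp
  then have "(\<sigma>, d0 \<rho> + h + w, p) = (0, 1 *\<^sub>R p, p)"
    using \<open>w = 0\<close> d0\<rho> eigenpair_harmonic_parts(1) assms by simp
  also have "\<dots> \<in> span (listed lam)" using listed_harmonic_span[OF p_H, of 1] assms by simp
  finally show ?thesis .
qed

lemma eigenpair_generic_harmonic_vanishes:
  assumes "lam \<noteq> 1" "lam \<noteq> -1"
  shows "p = 0" "h = 0"
proof -
  have "p = (lam * lam) *\<^sub>R p" using eigenpair_harmonic_parts by (metis scaleR_scaleR)
  then have "(1 - lam * lam) *\<^sub>R p = 0" by (simp add: algebra_simps)
  moreover have "1 - lam * lam \<noteq> 0" using assms by (auto simp: algebra_simps square_eq_1_iff)
  ultimately show "p = 0" by simp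
  then show "h = 0" using eigenpair_harmonic_parts(1) by simp
qed

lemma eigenpair_generic_Zperp:
  assumes "lam \<noteq> -1"
  shows "\<sigma> \<in> Zperp V0 d0"
proof -
  obtain \<kappa> where \<kappa>: "\<kappa> \<in> V0" "d0 \<kappa> = 0" "\<sigma> - \<kappa> \<in> Zperp V0 d0"
    using Zperp_decomposition[OF V0 d0_lin \<sigma>_V0] by blast
  have "(1 + lam) * inner \<sigma> \<kappa> = 0"
    using eigenpair_potential_part[OF \<kappa>(1)] \<kappa>(2) by (simp add: algebra_simps)
  moreover have "inner \<kappa> \<kappa> = inner \<sigma> \<kappa>"
    using Zperp_kernel_orthogonal[OF \<kappa>(3) \<kappa>(1,2)] by (simp add: inner_diff_left)
  ultimately have "\<kappa> = 0" using assms by (simp add: add_eq_0_iff)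
  with \<kappa>(3) show ?thesis by simp
qed

lemma eigenpair_generic_potential_equation:
  assumes "lam \<noteq> 1" "lam \<noteq> -1" "\<tau> \<in> V0"
  shows "inner (d0 \<sigma>) (d0 \<tau>) = lam / (\<gamma> * (1 - lam)) * inner \<sigma> \<tau>"
proof -
  define r where "r = inner (d0 \<rho>) (d0 \<tau>)"
  have e: "inner (d0 \<sigma>) (d0 \<tau>) = lam * r / \<gamma>"
    using arg_cong[OF eigenpair_exact_part, of "\<lambda>x. inner x (d0 \<tau>)"] gamma_pos
    by (simp add: r_def field_simps)
  then have "r - inner \<sigma> \<tau> = lam * inner \<sigma> \<tau> + lam * lam * r"
    using eigenpair_potential_part[OF assms(3)] gamma_pos by (simp add: r_def algebra_simps)
  then have "(1 + lam) * (r * (1 - lam) - inner \<sigma> \<tau>) = 0" by algebra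
  then have s: "inner \<sigma> \<tau> = r * (1 - lam)" using assms(2) by (simp add: add_eq_0_iff)
  show ?thesis unfolding e s using assms(1) gamma_pos by (simp add: field_simps)
qed

lemma eigenpair_generic_exact:
  assumes "lam \<noteq> -1"
  shows "d0 \<rho> = (\<gamma> / lam) *\<^sub>R d0 \<sigma>"
proof (cases "lam = 0")
  case True
  then have "d0 \<sigma> = 0" using eigenpair_exact_part gamma_pos by simp
  then have "\<sigma> = 0" using Zperp_kernel_eq_0[OF eigenpair_generic_Zperp[OF assms]] by simp
  then have "inner (d0 \<rho>) (d0 \<rho>) = 0" using eigenpair_potential_part[OF \<rho>] True by simp
  then show ?thesis using True by simp
next
  case False
  then have "d0 \<rho> = inverse lam *\<^sub>R (lam *\<^sub>R d0 \<rho>)" by simp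
  then show ?thesis using eigenpair_exact_part by (simp add: divide_inverse_commute)
qed

lemma eigenpair_generic_in_span:
  assumes "lam \<noteq> 1" "lam \<noteq> -1"
  shows "(\<sigma>, d0 \<rho> + h + w, p) \<in> span (listed lam)"
proof -
  define m where "m = lam / (\<gamma> * (1 - lam))"
  have lam_m: "lam = m * \<gamma> / (m * \<gamma> + 1)"
    using assms(1) gamma_pos by (simp add: m_def field_simps)
  have eq0: "inner (d0 \<sigma>) (d0 \<tau>) = m * inner \<sigma> \<tau>" if "\<tau> \<in> Zperp V0 d0" for \<tau>
    using eigenpair_generic_potential_equation[OF assms] that Zperp_subset by (auto simp: m_def)
  have eq1: "inner (d1 w) (d1 v) = m * inner w v" if "v \<in> Zperp V1 d1" for v
    using eigenpair_coexact_part[OF that] assms(1) gamma_pos by (simp add: m_def field_simps)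
  have "(\<sigma>, d0 \<rho> + h + w, p) = (\<sigma>, (\<gamma> / lam) *\<^sub>R d0 \<sigma>, 0) + (0, w, 0)"
    using eigenpair_generic_harmonic_vanishes[OF assms] eigenpair_generic_exact[OF assms(2)] by simp
  also have "\<dots> \<in> span (listed lam)"
    unfolding lam_m using listed_coexact_potential_span[OF eigenpair_generic_Zperp[OF assms(2)] eq0]
      listed_coexact_span[OF w eq1]
    by (rule span_add)
  finally show ?thesis .
qed

end

lemma eigenpair_in_listed_span:
  assumes "is_eigenpair V0 V1 d0 d1 \<gamma> lam x"
  shows "x \<in> span (listed lam)"
proof -
  obtain \<sigma> u p where x: "x = (\<sigma>, u, p)" by (cases x)
  then have "u \<in> V1" using assms by (auto simp: is_eigenpair_def mixed_space_def)
  then obtain \<rho> h w where hodge: "\<rho> \<in> V0" "h \<in> H" "w \<in> Zperp V1 d1" "u = d0 \<rho> + h + w"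
    by (rule hodge_decomposition)
  then have ep: "is_eigenpair V0 V1 d0 d1 \<gamma> lam (\<sigma>, d0 \<rho> + h + w, p)" using assms x by simp
  consider "lam = -1" | "lam = 1" | "lam \<noteq> 1" "lam \<noteq> -1" by blast
  then show ?thesis
    using eigenpair_minus_one_in_span[OF ep hodge(1-3)] eigenpair_one_in_span[OF ep hodge(1-3)]
      eigenpair_generic_in_span[OF ep hodge(1-3)]
    by cases (simp_all add: x hodge(4))
qed

end

theorem mainTheorem14:
  fixes V0 :: "'a::{real_inner,complete_space} set"
    and V1 :: "'b::{real_inner,complete_space} set"
    and d0 :: "'a \<Rightarrow> 'b" and d1 :: "'b \<Rightarrow> 'c::{real_inner,complete_space}"
    and \<gamma> :: real
  assumes V0: "fin_dim_subspace V0" and V1: "fin_dim_subspace V1"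
    and d0_lin: "linear_on_dom V0 d0" and d1_lin: "linear_on_dom V1 d1"
    and d0_into: "d0 ` V0 \<subseteq> V1"
    and complex: "\<forall>\<sigma>\<in>V0. d1 (d0 \<sigma>) = 0"
    and gamma: "\<gamma> > 0"
  shows
    "(\<forall>\<sigma>\<in>V0. \<sigma> \<noteq> 0 \<longrightarrow> is_eigenpair V0 V1 d0 d1 \<gamma> (-1) (\<sigma>, - \<gamma> *\<^sub>R d0 \<sigma>, 0))
   \<and> (\<forall>p\<in>harmonic V0 V1 d0 d1. \<forall>l\<in>{1, -1::real}. p \<noteq> 0 \<longrightarrow>
        is_eigenpair V0 V1 d0 d1 \<gamma> l (0, l *\<^sub>R p, p))
   \<and> (\<forall>u\<in>Zperp V1 d1. \<forall>\<mu>::real. u \<noteq> 0 \<and> \<mu> > 0 \<and>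
        (\<forall>v\<in>Zperp V1 d1. inner (d1 u) (d1 v) = \<mu> * inner u v) \<longrightarrow>
        is_eigenpair V0 V1 d0 d1 \<gamma> (\<mu> * \<gamma> / (\<mu> * \<gamma> + 1)) (0, u, 0))
   \<and> (\<forall>\<sigma>\<in>Zperp V0 d0. \<forall>\<nu>::real. \<sigma> \<noteq> 0 \<and> \<nu> > 0 \<and>
        (\<forall>\<tau>\<in>Zperp V0 d0. inner (d0 \<sigma>) (d0 \<tau>) = \<nu> * inner \<sigma> \<tau>) \<longrightarrow>
        (let lam = \<nu> * \<gamma> / (\<nu> * \<gamma> + 1) in
          is_eigenpair V0 V1 d0 d1 \<gamma> lam (\<sigma>, (\<gamma> / lam) *\<^sub>R d0 \<sigma>, 0)))
   \<and> (\<exists>B \<subseteq> fst ` listed_eigenpairs V0 V1 d0 d1 \<gamma>.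
        independent B \<and> span B = mixed_space V0 V1 d0 d1)
   \<and> (\<forall>lam x. is_eigenpair V0 V1 d0 d1 \<gamma> lam x \<longrightarrow>
        x \<in> span {y. (y, lam) \<in> listed_eigenpairs V0 V1 d0 d1 \<gamma>})"
proof -
  interpret mixed_eigenproblem V0 V1 d0 d1 \<gamma>
    using assms by unfold_locales auto
  show ?thesis
    using exact_eigenpair harmonic_eigenpair coexact_eigenpair coexact_potential_eigenpair
      listed_basis eigenpair_in_listed_span
    by (simp add: Let_def)
qed

end
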